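(* Let $\mathbb C^2_*=\mathbb C^2\setminus\{0\}$, $\Delta$ the open unit disc, and $\phi(v)=\frac{v+1/2}{1+v/2}$. Let $\mathbb Z$ act on $\mathbb C^2_*\times\Delta$ by $n\cdot(z,v)=(2^nz,\phi^n(v))$ and let $\Omega=(\mathbb C^2_*\times\Delta)/\mathbb Z$ (a flat disc bundle over the Hopf surface). Let $A=\Delta/\{\phi^n:n\in\mathbb Z\}$. Then $\Omega$ is biholomorphic to the product $A\times\mathbb C^2_*$. *)

theory Defs
  imports "HOL-Analysis.Analysis"
begin

definition cscale :: "complex \<Rightarrow> complex^'n \<Rightarrow> complex^'n" where
  "cscale c x = (\<chi> i. c * x $ i)"

definition holo_map :: "(complex^'n \<Rightarrow> complex^'m) \<Rightarrow> (complex^'n) set \<Rightarrow> bool" where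
  "holo_map f U \<longleftrightarrow> open U \<and>
     (\<forall>x\<in>U. \<exists>L. (f has_derivative L) (at x) \<and> (\<forall>c y. L (cscale c y) = cscale c (L y)))"

text \<open>A map between quotient spaces P = proj ` X and Q = rho ` Y (X, Y open in complex
  coordinate spaces, proj and rho the quotient projections, which are local biholomorphisms)
  is holomorphic iff it lifts locally to holomorphic maps.\<close>
definition quot_holo ::
  "(complex^'n) set \<Rightarrow> (complex^'n \<Rightarrow> 'p) \<Rightarrow> (complex^'m) set \<Rightarrow> (complex^'m \<Rightarrow> 'q)
     \<Rightarrow> ('p \<Rightarrow> 'q) \<Rightarrow> bool" where
  "quot_holo X proj Y rho f \<longleftrightarrow>
     (\<forall>x\<in>X. \<exists>U g. x \<in> U \<and> U \<subseteq> X \<and> holo_map g U \<and> g ` U \<subseteq> Y \<and>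
        (\<forall>u\<in>U. f (proj u) = rho (g u)))"

definition unit_disc :: "complex set" where
  "unit_disc = ball 0 1"

definition C2star :: "(complex \<times> complex) set" where
  "C2star = UNIV - {(0, 0)}"

definition hopf_phi :: "complex \<Rightarrow> complex" where
  "hopf_phi v = (v + 1/2) / (1 + v/2)"

definition hopf_phi_inv :: "complex \<Rightarrow> complex" where
  "hopf_phi_inv v = (v - 1/2) / (1 - v/2)"

definition phi_int :: "int \<Rightarrow> complex \<Rightarrow> complex" where
  "phi_int n = (if n \<ge> 0 then hopf_phi ^^ nat n else hopf_phi_inv ^^ nat (- n))"

text \<open>Covering space C^2_* x Delta, as a subset of C^3 (coordinates 1,2: z; coordinate 3: v).\<close>
definition Omega_tilde :: "(complex^3) set" where
  "Omega_tilde = {x. (x $ 1, x $ 2) \<noteq> (0, 0) \<and> x $ 3 \<in> unit_disc}"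

definition omega_act :: "int \<Rightarrow> complex^3 \<Rightarrow> complex^3" where
  "omega_act n x = (\<chi> i. if i = 3 then phi_int n (x $ 3) else (2::complex) powi n * x $ i)"

definition omega_orbit :: "complex^3 \<Rightarrow> (complex^3) set" where
  "omega_orbit x = range (\<lambda>n. omega_act n x)"

definition Omega :: "(complex^3) set set" where
  "Omega = omega_orbit ` Omega_tilde"

definition disc_orbit :: "complex \<Rightarrow> complex set" where
  "disc_orbit v = range (\<lambda>n. phi_int n v)"

definition A_annulus :: "complex set set" where
  "A_annulus = disc_orbit ` unit_disc"

text \<open>Covering Delta x C^2_* of A x C^2_*, as a subset of C^3, with its projection.\<close>
definition AC_tilde :: "(complex^3) set" where
  "AC_tilde = {y. y $ 1 \<in> unit_disc \<and> (y $ 2, y $ 3) \<noteq> (0, 0)}"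

definition AC_proj :: "complex^3 \<Rightarrow> complex set \<times> (complex \<times> complex)" where
  "AC_proj y = (disc_orbit (y $ 1), (y $ 2, y $ 3))"

end

theory Submission
  imports Defs
begin

text \<open>The Cayley transform v \<mapsto> (1 + v)/(1 - v) maps the disc onto the right half-plane and
  conjugates phi to multiplication by 3. Hence g(v) = ((1 + v)/(1 - v))^(ln 2 / ln 3) is a
  nowhere vanishing holomorphic function on the disc with g(phi v) = 2 g(v), and
  (z, v) \<mapsto> ([v], z / g(v)) is invariant under the action of \<int>. It descends to a bijection
  from Omega onto A \<times> C^2_*, whose local lifts (z, v) \<mapsto> (v, z / g(v)) and
  (v, w) \<mapsto> (w g(v), v) are holomorphic.\<close>

lemma bounded_linear_axis: "bounded_linear (axis j :: 'a::real_normed_vector \<Rightarrow> 'a^'n)"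
proof (rule bounded_linear_intro[where K=1])
  fix x y :: 'a and r :: real
  show "axis j (x + y) = (axis j x :: 'a^'n) + axis j y"
    and "axis j (r *\<^sub>R x) = r *\<^sub>R (axis j x :: 'a^'n)"
    by (simp_all add: vec_eq_iff axis_def)
  have "norm (axis j x :: 'a^'n) = norm x"
    unfolding norm_vec_def L2_set_def axis_def
    by (simp add: if_distrib[of "\<lambda>t. (norm t)\<^sup>2"] sum.delta cong: if_cong)
  then show "norm (axis j x :: 'a^'n) \<le> norm x * 1" by simp
qed

lemma has_derivative_vec_lambda:
  fixes f :: "'a::real_normed_vector \<Rightarrow> 'b::real_normed_vector^'n"
  assumes "\<And>j. ((\<lambda>u. f u $ j) has_derivative L j) F"
  shows "(f has_derivative (\<lambda>h. \<chi> j. L j h)) F"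
proof -
  have "((\<lambda>u. \<Sum>j\<in>UNIV. axis j (f u $ j)) has_derivative (\<lambda>h. \<Sum>j\<in>UNIV. axis j (L j h))) F"
    by (intro has_derivative_sum bounded_linear.has_derivative[OF bounded_linear_axis] assms)
  moreover have "(\<lambda>u. \<Sum>j\<in>UNIV. axis j (f u $ j)) = f"
    and "(\<lambda>h. \<Sum>j\<in>UNIV. axis j (L j h)) = (\<lambda>h. \<chi> j. L j h)"
    by (simp_all add: fun_eq_iff vec_eq_iff sum_component axis_def)
  ultimately show ?thesis by simp
qed

definition holo_at :: "(complex^'n \<Rightarrow> complex) \<Rightarrow> complex^'n \<Rightarrow> bool" where
  "holo_at f x \<longleftrightarrow> (\<exists>L. (f has_derivative L) (at x) \<and> (\<forall>c h. L (cscale c h) = c * L h))"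

lemma holo_at_nth: "holo_at (\<lambda>u. u $ j) x"
  unfolding holo_at_def
  by (rule exI[of _ "\<lambda>h. h $ j"]) (auto simp: cscale_def intro: bounded_linear.has_derivative)

lemma holo_at_mult:
  assumes "holo_at f x" "holo_at g x"
  shows "holo_at (\<lambda>u. f u * g u) x"
proof -
  obtain L M where L: "(f has_derivative L) (at x)" "\<forall>c h. L (cscale c h) = c * L h"
    and M: "(g has_derivative M) (at x)" "\<forall>c h. M (cscale c h) = c * M h"
    using assms unfolding holo_at_def by blast
  have "((\<lambda>u. f u * g u) has_derivative (\<lambda>h. f x * M h + L h * g x)) (at x)"
    by (rule has_derivative_mult[OF L(1) M(1)])
  moreover have "\<forall>c h. f x * M (cscale c h) + L (cscale c h) * g x = c * (f x * M h + L h * g x)"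
    using L(2) M(2) by (simp add: algebra_simps)
  ultimately show ?thesis unfolding holo_at_def by blast
qed

lemma holo_at_compose_holomorphic:
  assumes "k holomorphic_on S" "open S" "x $ j \<in> S"
  shows "holo_at (\<lambda>u. k (u $ j)) x"
proof -
  have "(k has_field_derivative deriv k (x $ j)) (at (x $ j))"
    using assms by (intro holomorphic_derivI)
  then have "(k has_derivative (\<lambda>h. deriv k (x $ j) * h)) (at (x $ j))"
    by (simp add: has_field_derivative_def)
  moreover have "((\<lambda>u. u $ j) has_derivative (\<lambda>h. h $ j)) (at x)"
    by (rule bounded_linear.has_derivative) auto
  ultimately have "((\<lambda>u. k (u $ j)) has_derivative (\<lambda>h. deriv k (x $ j) * h $ j)) (at x)"
    using has_derivative_compose by blast
  then show ?thesis unfolding holo_at_def by (force simp: cscale_def)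
qed

lemma holo_map_componentwise:
  fixes G :: "complex^'n \<Rightarrow> complex^'m"
  assumes "open U" "\<And>x j. x \<in> U \<Longrightarrow> holo_at (\<lambda>u. G u $ j) x"
  shows "holo_map G U"
  unfolding holo_map_def
proof (intro conjI assms(1) ballI)
  fix x assume "x \<in> U"
  then obtain L where L: "\<And>j. ((\<lambda>u. G u $ j) has_derivative L j) (at x)"
      "\<And>j c h. L j (cscale c h) = c * L j h"
    using assms(2) unfolding holo_at_def by metis
  then have "(G has_derivative (\<lambda>h. \<chi> j. L j h)) (at x)"
    by (intro has_derivative_vec_lambda)
  moreover have "\<forall>c h. (\<chi> j. L j (cscale c h)) = cscale c (\<chi> j. L j h)"
    using L(2) by (simp add: cscale_def vec_eq_iff)
  ultimately show "\<exists>L. (G has_derivative L) (at x) \<and> (\<forall>c y. L (cscale c y) = cscale c (L y))"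
    by blast
qed

lemma holo_map_vector_3:
  assumes "open U" "\<And>x. x \<in> U \<Longrightarrow> holo_at f x \<and> holo_at g x \<and> holo_at h x"
  shows "holo_map (\<lambda>u. vector [f u, g u, h u] :: complex^3) U"
proof (rule holo_map_componentwise[OF assms(1)])
  fix x and j :: 3 assume "x \<in> U"
  then show "holo_at (\<lambda>u. vector [f u, g u, h u] $ j) x"
    using assms(2)[OF \<open>x \<in> U\<close>] exhaust_3[of j] by (elim disjE) simp_all
qed

lemma quot_holo_global_lift:
  assumes "holo_map g X" "g ` X \<subseteq> Y" "\<And>u. u \<in> X \<Longrightarrow> f (proj u) = rho (g u)"
  shows "quot_holo X proj Y rho f"
  unfolding quot_holo_def using assms by blast

lemma norm_less_iff_Re_Im: "norm (a::complex) < norm b \<longleftrightarrow> (Re a)\<^sup>2 + (Im a)\<^sup>2 < (Re b)\<^sup>2 + (Im b)\<^sup>2"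
  by (metis cmod_power2 norm_ge_zero power2_less_imp_less power_strict_mono zero_less_numeral)

lemma unit_disc_denominators_nonzero:
  assumes "v \<in> unit_disc"
  shows "1 + v/2 \<noteq> 0" "1 - v/2 \<noteq> 0" "1 - v \<noteq> 0"
proof -
  have "norm v < 1" using assms by (simp add: unit_disc_def)
  then have "v \<noteq> -2" "v \<noteq> 2" "v \<noteq> 1" by auto
  then show "1 + v/2 \<noteq> 0" "1 - v/2 \<noteq> 0" "1 - v \<noteq> 0"
    by (auto simp: field_simps add_eq_0_iff dest: sym)
qed

lemma hopf_phi_in_unit_disc:
  assumes "v \<in> unit_disc" shows "hopf_phi v \<in> unit_disc"
proof -
  have "(Re v)\<^sup>2 + (Im v)\<^sup>2 < 1"
    using assms norm_less_iff_Re_Im[of v 1] by (simp add: unit_disc_def)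
  \<comment> \<open>since |v + 1/2|^2 - |1 + v/2|^2 = 3/4 (|v|^2 - 1)\<close>
  then have "norm (v + 1/2) < norm (1 + v/2)"
    unfolding norm_less_iff_Re_Im by (simp add: power2_eq_square field_simps)
  with unit_disc_denominators_nonzero[OF assms] show ?thesis
    by (simp add: hopf_phi_def unit_disc_def norm_divide divide_less_eq)
qed

lemma hopf_phi_inv_in_unit_disc:
  assumes "v \<in> unit_disc" shows "hopf_phi_inv v \<in> unit_disc"
proof -
  have "(Re v)\<^sup>2 + (Im v)\<^sup>2 < 1"
    using assms norm_less_iff_Re_Im[of v 1] by (simp add: unit_disc_def)
  then have "norm (v - 1/2) < norm (1 - v/2)"
    unfolding norm_less_iff_Re_Im by (simp add: power2_eq_square field_simps)
  with unit_disc_denominators_nonzero[OF assms] show ?thesis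
    by (simp add: hopf_phi_inv_def unit_disc_def norm_divide divide_less_eq)
qed

lemma hopf_phi_inv_hopf_phi:
  assumes "v \<in> unit_disc" shows "hopf_phi_inv (hopf_phi v) = v"
proof -
  let ?w = "hopf_phi v"
  have "?w * (1 + v/2) = v + 1/2"
    using unit_disc_denominators_nonzero[OF assms] by (simp add: hopf_phi_def)
  then have "?w - 1/2 = v * (1 - ?w/2)" by (simp add: algebra_simps)
  with unit_disc_denominators_nonzero[OF hopf_phi_in_unit_disc[OF assms]] show ?thesis
    by (simp add: hopf_phi_inv_def divide_eq_eq)
qed

lemma hopf_phi_hopf_phi_inv:
  assumes "v \<in> unit_disc" shows "hopf_phi (hopf_phi_inv v) = v"
proof -
  let ?w = "hopf_phi_inv v"
  have "?w * (1 - v/2) = v - 1/2"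
    using unit_disc_denominators_nonzero[OF assms] by (simp add: hopf_phi_inv_def)
  then have "?w + 1/2 = v * (1 + ?w/2)" by (simp add: algebra_simps)
  with unit_disc_denominators_nonzero[OF hopf_phi_inv_in_unit_disc[OF assms]] show ?thesis
    by (simp add: hopf_phi_def divide_eq_eq)
qed

lemma phi_int_in_unit_disc:
  assumes "v \<in> unit_disc" shows "phi_int n v \<in> unit_disc"
proof -
  have "(f ^^ k) v \<in> unit_disc" if "\<And>w. w \<in> unit_disc \<Longrightarrow> f w \<in> unit_disc" for f k
    using that assms by (induction k) auto
  then show ?thesis
    unfolding phi_int_def using hopf_phi_in_unit_disc hopf_phi_inv_in_unit_disc by simp
qed

lemma phi_int_succ:
  assumes "v \<in> unit_disc" shows "phi_int (n + 1) v = hopf_phi (phi_int n v)"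
proof (cases "n \<ge> 0")
  case True
  then show ?thesis by (simp add: phi_int_def nat_add_distrib)
next
  case False
  define k where "k = nat (- n) - 1"
  have k: "n = - int (Suc k)" using False unfolding k_def by simp
  have "phi_int n v = hopf_phi_inv (phi_int (n + 1) v)"
    using k by (simp add: phi_int_def nat_add_distrib)
  moreover have "phi_int (n + 1) v \<in> unit_disc" by (rule phi_int_in_unit_disc[OF assms])
  ultimately show ?thesis by (simp add: hopf_phi_hopf_phi_inv)
qed

lemma phi_int_pred:
  assumes "v \<in> unit_disc" shows "phi_int (n - 1) v = hopf_phi_inv (phi_int n v)"
  using phi_int_succ[OF assms, of "n - 1"]
    hopf_phi_inv_hopf_phi[OF phi_int_in_unit_disc[OF assms, of "n - 1"]] by simp

lemma phi_int_add:
  assumes "v \<in> unit_disc" shows "phi_int (m + n) v = phi_int m (phi_int n v)"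
proof (induction m rule: int_induct[where k=0])
  case base
  then show ?case by (simp add: phi_int_def)
next
  case (step1 i)
  have "phi_int (i + 1 + n) v = hopf_phi (phi_int (i + n) v)"
    using phi_int_succ[OF assms, of "i + n"] by (simp add: ac_simps)
  with step1 phi_int_succ[OF phi_int_in_unit_disc[OF assms]] show ?case by simp
next
  case (step2 i)
  have "phi_int (i - 1 + n) v = hopf_phi_inv (phi_int (i + n) v)"
    using phi_int_pred[OF assms, of "i + n"] by (simp add: algebra_simps)
  with step2 phi_int_pred[OF phi_int_in_unit_disc[OF assms]] show ?case by simp
qed

definition cayley :: "complex \<Rightarrow> complex" where
  "cayley v = (1 + v) / (1 - v)"

lemma Re_cayley_pos:
  assumes "v \<in> unit_disc" shows "Re (cayley v) > 0"
proof -
  have "(Re v)\<^sup>2 + (Im v)\<^sup>2 < 1"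
    using assms norm_less_iff_Re_Im[of v 1] by (simp add: unit_disc_def)
  then have "Re (1 + v) * Re (1 - v) + Im (1 + v) * Im (1 - v) > 0"
    by (simp add: power2_eq_square algebra_simps)
  moreover have "(Re (1 - v))\<^sup>2 + (Im (1 - v))\<^sup>2 > 0"
    using unit_disc_denominators_nonzero[OF assms]
    by (metis complex_eq_0 less_le sum_power2_ge_zero)
  ultimately show ?thesis unfolding cayley_def Re_divide by simp
qed

lemma cayley_hopf_phi:
  assumes "v \<in> unit_disc" shows "cayley (hopf_phi v) = 3 * cayley v"
proof -
  let ?w = "hopf_phi v"
  have w: "?w * (1 + v/2) = v + 1/2"
    using unit_disc_denominators_nonzero[OF assms] by (simp add: hopf_phi_def)
  have "(1 + ?w) * (1 - v) - 3 * (1 + v) * (1 - ?w) = 4 * (?w * (1 + v/2)) - 2 - 4 * v"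
    by (simp add: algebra_simps)
  also have "\<dots> = 0" unfolding w by (simp add: algebra_simps)
  finally have "(1 + ?w) * (1 - v) = 3 * (1 + v) * (1 - ?w)" by simp
  with unit_disc_denominators_nonzero[OF assms]
    unit_disc_denominators_nonzero[OF hopf_phi_in_unit_disc[OF assms]] show ?thesis
    by (simp add: cayley_def field_simps)
qed

definition hopf_gauge :: "complex \<Rightarrow> complex" where
  "hopf_gauge v = exp (of_real (ln 2 / ln 3) * Ln (cayley v))"

lemma hopf_gauge_nonzero: "hopf_gauge v \<noteq> 0"
  by (simp add: hopf_gauge_def)

lemma hopf_gauge_hopf_phi:
  assumes "v \<in> unit_disc" shows "hopf_gauge (hopf_phi v) = 2 * hopf_gauge v"
proof -
  have "cayley v \<notin> \<real>\<^sub>\<le>\<^sub>0" "cayley v \<noteq> 0"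
    using Re_cayley_pos[OF assms] by (auto simp: complex_nonpos_Reals_iff)
  moreover have "Ln (3::complex) = of_real (ln 3)" using Ln_of_real[of 3] by simp
  ultimately have "Ln (cayley (hopf_phi v)) = of_real (ln 3) + Ln (cayley v)"
    using Ln_times_of_real[of 3 "cayley v"] by (simp add: cayley_hopf_phi[OF assms])
  then have "hopf_gauge (hopf_phi v) = exp (of_real (ln 2 / ln 3) * of_real (ln 3)) * hopf_gauge v"
    by (simp add: hopf_gauge_def distrib_left exp_add)
  also have "of_real (ln 2 / ln 3) * of_real (ln 3) = (of_real (ln 2) :: complex)"
    by (simp del: of_real_divide flip: of_real_mult)
  finally show ?thesis by (simp add: exp_of_real)
qed

lemma hopf_gauge_phi_int:
  assumes "v \<in> unit_disc" shows "hopf_gauge (phi_int n v) = 2 powi n * hopf_gauge v"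
proof (induction n rule: int_induct[where k=0])
  case base
  then show ?case by (simp add: phi_int_def)
next
  case (step1 i)
  then show ?case
    using phi_int_succ[OF assms] hopf_gauge_hopf_phi[OF phi_int_in_unit_disc[OF assms]]
    by (simp add: power_int_add_1)
next
  case (step2 i)
  have "hopf_gauge (phi_int i v) = 2 * hopf_gauge (phi_int (i - 1) v)"
    using phi_int_succ[OF assms, of "i - 1"] hopf_gauge_hopf_phi[OF phi_int_in_unit_disc[OF assms]]
    by simp
  with step2 show ?case
    using power_int_add_1[of "2::complex" "i - 1"] by simp
qed

lemma holomorphic_hopf_gauge: "hopf_gauge holomorphic_on unit_disc"
proof -
  have "cayley holomorphic_on unit_disc"
    unfolding cayley_def using unit_disc_denominators_nonzero by (intro holomorphic_intros) auto
  moreover have "cayley v \<notin> \<real>\<^sub>\<le>\<^sub>0" if "v \<in> unit_disc" for v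
    using Re_cayley_pos[OF that] by (auto simp: complex_nonpos_Reals_iff)
  ultimately show ?thesis
    unfolding hopf_gauge_def by (intro holomorphic_intros) auto
qed

lemma range_action_shift:
  fixes f :: "int \<Rightarrow> 'a \<Rightarrow> 'a"
  assumes "\<And>m. f m (f n x) = f (m + n) x"
  shows "range (\<lambda>m. f m (f n x)) = range (\<lambda>m. f m x)"
proof -
  have "range (\<lambda>m. f m (f n x)) = (\<lambda>m. f m x) ` range (\<lambda>m. m + n)"
    by (simp only: assms image_image)
  also have "\<dots> = range (\<lambda>m. f m x)" by simp
  finally show ?thesis .
qed

lemma disc_orbit_phi_int:
  assumes "v \<in> unit_disc" shows "disc_orbit (phi_int n v) = disc_orbit v"
  unfolding disc_orbit_def by (rule range_action_shift) (simp add: phi_int_add[OF assms])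

lemma omega_act_nth [simp]:
  "omega_act n x $ 1 = 2 powi n * x $ 1"
  "omega_act n x $ 2 = 2 powi n * x $ 2"
  "omega_act n x $ 3 = phi_int n (x $ 3)"
  by (simp_all add: omega_act_def)

lemma omega_orbit_omega_act:
  assumes "x $ 3 \<in> unit_disc" shows "omega_orbit (omega_act n x) = omega_orbit x"
  unfolding omega_orbit_def
  by (rule range_action_shift) (simp add: vec_eq_iff forall_3 phi_int_add[OF assms] power_int_add)

lemma in_omega_orbit_iff: "y \<in> omega_orbit x \<longleftrightarrow> (\<exists>n. y = omega_act n x)"
  by (auto simp: omega_orbit_def)

lemma omega_orbit_self: "x \<in> omega_orbit x"
  unfolding in_omega_orbit_iff
  by (rule exI[of _ 0]) (simp add: vec_eq_iff forall_3 phi_int_def)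

definition trivialize :: "complex^3 \<Rightarrow> complex set \<times> (complex \<times> complex)" where
  "trivialize x = (disc_orbit (x $ 3), (x $ 1 / hopf_gauge (x $ 3), x $ 2 / hopf_gauge (x $ 3)))"

lemma trivialize_omega_act:
  assumes "x $ 3 \<in> unit_disc" shows "trivialize (omega_act n x) = trivialize x"
  using assms by (simp add: trivialize_def disc_orbit_phi_int hopf_gauge_phi_int)

lemma eq_phi_int_if_disc_orbit_eq:
  assumes "disc_orbit v = disc_orbit w" shows "\<exists>n. w = phi_int n v"
proof -
  have "w \<in> disc_orbit w" unfolding disc_orbit_def by (rule range_eqI[of _ _ 0]) (simp add: phi_int_def)
  then show ?thesis using assms by (auto simp: disc_orbit_def)
qed

lemma omega_orbit_eq_if_trivialize_eq:
  assumes x: "x \<in> Omega_tilde" and "y \<in> Omega_tilde" and eq: "trivialize x = trivialize y"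
  shows "omega_orbit x = omega_orbit y"
proof -
  have x3: "x $ 3 \<in> unit_disc" using x by (simp add: Omega_tilde_def)
  obtain n where n: "y $ 3 = phi_int n (x $ 3)"
    using eq eq_phi_int_if_disc_orbit_eq[of "x $ 3" "y $ 3"] by (auto simp: trivialize_def)
  have "trivialize (omega_act n x) = trivialize y"
    using eq trivialize_omega_act[OF x3] by simp
  then have "omega_act n x = y"
    using n hopf_gauge_nonzero by (simp add: trivialize_def vec_eq_iff forall_3)
  then show ?thesis using omega_orbit_omega_act[OF x3, of n] by simp
qed

definition trivialize_orbit :: "(complex^3) set \<Rightarrow> complex set \<times> (complex \<times> complex)" where
  "trivialize_orbit P = trivialize (SOME x. x \<in> Omega_tilde \<and> omega_orbit x = P)"

lemma trivialize_orbit_omega_orbit: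
  assumes "x \<in> Omega_tilde" shows "trivialize_orbit (omega_orbit x) = trivialize x"
proof -
  let ?y = "SOME y. y \<in> Omega_tilde \<and> omega_orbit y = omega_orbit x"
  have "?y \<in> Omega_tilde \<and> omega_orbit ?y = omega_orbit x"
    by (rule someI[of _ x]) (simp add: assms)
  then obtain n where "?y = omega_act n x"
    using omega_orbit_self[of ?y] by (auto simp: in_omega_orbit_iff)
  then show ?thesis
    using trivialize_omega_act assms by (simp add: trivialize_orbit_def Omega_tilde_def)
qed

lemma bij_betw_trivialize_orbit: "bij_betw trivialize_orbit Omega (A_annulus \<times> C2star)"
proof (rule bij_betw_imageI)
  show "inj_on trivialize_orbit Omega"
  proof (rule inj_onI)
    fix P Q assume "P \<in> Omega" "Q \<in> Omega" and eq: "trivialize_orbit P = trivialize_orbit Q"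
    then obtain x y where x: "x \<in> Omega_tilde" "P = omega_orbit x"
      and y: "y \<in> Omega_tilde" "Q = omega_orbit y"
      unfolding Omega_def by blast
    with eq have "trivialize x = trivialize y" by (simp add: trivialize_orbit_omega_orbit)
    with x y show "P = Q" using omega_orbit_eq_if_trivialize_eq by blast
  qed
  show "trivialize_orbit ` Omega = A_annulus \<times> C2star"
  proof (intro equalityI subsetI)
    fix z assume "z \<in> trivialize_orbit ` Omega"
    then obtain x where "x \<in> Omega_tilde" "z = trivialize x"
      by (auto simp: Omega_def trivialize_orbit_omega_orbit)
    then show "z \<in> A_annulus \<times> C2star"
      using hopf_gauge_nonzero[of "x $ 3"]
      by (auto simp: trivialize_def A_annulus_def C2star_def Omega_tilde_def)
  next
    fix z assume "z \<in> A_annulus \<times> C2star"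
    then obtain v a b where z: "z = (disc_orbit v, (a, b))" "v \<in> unit_disc" "(a, b) \<noteq> (0, 0)"
      by (auto simp: A_annulus_def C2star_def)
    define x :: "complex^3" where "x = vector [a * hopf_gauge v, b * hopf_gauge v, v]"
    have x: "x \<in> Omega_tilde" "trivialize x = z"
      using z hopf_gauge_nonzero[of v] by (auto simp: x_def Omega_tilde_def trivialize_def)
    have "omega_orbit x \<in> Omega" unfolding Omega_def using x(1) by (rule imageI)
    then show "z \<in> trivialize_orbit ` Omega"
      by (rule rev_image_eqI) (simp add: trivialize_orbit_omega_orbit x)
  qed
qed

definition trivialize_lift :: "complex^3 \<Rightarrow> complex^3" where
  "trivialize_lift u = vector [u $ 3, u $ 1 / hopf_gauge (u $ 3), u $ 2 / hopf_gauge (u $ 3)]"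

definition untrivialize_lift :: "complex^3 \<Rightarrow> complex^3" where
  "untrivialize_lift y = vector [y $ 2 * hopf_gauge (y $ 1), y $ 3 * hopf_gauge (y $ 1), y $ 1]"

lemma holo_at_div_hopf_gauge:
  assumes "x $ k \<in> unit_disc"
  shows "holo_at (\<lambda>u. u $ j / hopf_gauge (u $ k)) x"
proof -
  have "(\<lambda>v. inverse (hopf_gauge v)) holomorphic_on unit_disc"
    using holomorphic_hopf_gauge hopf_gauge_nonzero by (intro holomorphic_intros) auto
  then show ?thesis
    unfolding divide_inverse using assms
    by (intro holo_at_mult holo_at_nth holo_at_compose_holomorphic) (auto simp: unit_disc_def)
qed

lemma holo_at_mult_hopf_gauge:
  assumes "x $ k \<in> unit_disc"
  shows "holo_at (\<lambda>u. u $ j * hopf_gauge (u $ k)) x"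
  using assms holomorphic_hopf_gauge
  by (intro holo_at_mult holo_at_nth holo_at_compose_holomorphic) (auto simp: unit_disc_def)

lemma open_nonzero_pair_times_disc:
  "open {x :: complex^'n. (x $ i, x $ j) \<noteq> (0, 0) \<and> x $ k \<in> unit_disc}"
proof -
  have "{x :: complex^'n. (x $ i, x $ j) \<noteq> (0, 0) \<and> x $ k \<in> unit_disc}
      = ((\<lambda>x. x $ i) -` (- {0}) \<union> (\<lambda>x. x $ j) -` (- {0})) \<inter> (\<lambda>x. x $ k) -` unit_disc"
    by auto
  then show ?thesis
    by (simp add: open_Int open_Un open_vimage_vec_nth open_Compl unit_disc_def)
qed

lemma open_Omega_tilde: "open Omega_tilde"
  unfolding Omega_tilde_def by (rule open_nonzero_pair_times_disc)

lemma open_AC_tilde: "open AC_tilde"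
proof -
  have eq: "AC_tilde = {y. (y $ 2, y $ 3) \<noteq> (0, 0) \<and> y $ 1 \<in> unit_disc}"
    unfolding AC_tilde_def by (simp only: conj_commute)
  show ?thesis unfolding eq by (rule open_nonzero_pair_times_disc)
qed

lemma holo_map_trivialize_lift: "holo_map trivialize_lift Omega_tilde"
  unfolding trivialize_lift_def
  by (rule holo_map_vector_3[OF open_Omega_tilde])
     (simp add: Omega_tilde_def holo_at_nth holo_at_div_hopf_gauge)

lemma holo_map_untrivialize_lift: "holo_map untrivialize_lift AC_tilde"
  unfolding untrivialize_lift_def
  by (rule holo_map_vector_3[OF open_AC_tilde])
     (simp add: AC_tilde_def holo_at_nth holo_at_mult_hopf_gauge)

lemma trivialize_lift_image: "trivialize_lift ` Omega_tilde \<subseteq> AC_tilde"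
  using hopf_gauge_nonzero by (auto simp: trivialize_lift_def Omega_tilde_def AC_tilde_def)

lemma untrivialize_lift_image: "untrivialize_lift ` AC_tilde \<subseteq> Omega_tilde"
  using hopf_gauge_nonzero by (auto simp: untrivialize_lift_def Omega_tilde_def AC_tilde_def)

lemma trivialize_untrivialize_lift: "trivialize (untrivialize_lift y) = AC_proj y"
  using hopf_gauge_nonzero by (simp add: trivialize_def untrivialize_lift_def AC_proj_def)

lemma quot_holo_trivialize_orbit:
  "quot_holo Omega_tilde omega_orbit AC_tilde AC_proj trivialize_orbit"
  using holo_map_trivialize_lift trivialize_lift_image
  by (rule quot_holo_global_lift)
     (simp add: trivialize_orbit_omega_orbit trivialize_def trivialize_lift_def AC_proj_def)

lemma quot_holo_inv_trivialize_orbit: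
  "quot_holo AC_tilde AC_proj Omega_tilde omega_orbit (inv_into Omega trivialize_orbit)"
  using holo_map_untrivialize_lift untrivialize_lift_image
proof (rule quot_holo_global_lift)
  fix y assume "y \<in> AC_tilde"
  then have "untrivialize_lift y \<in> Omega_tilde" using untrivialize_lift_image by blast
  then have "omega_orbit (untrivialize_lift y) \<in> Omega"
    and "trivialize_orbit (omega_orbit (untrivialize_lift y)) = AC_proj y"
    by (simp_all add: Omega_def trivialize_orbit_omega_orbit trivialize_untrivialize_lift)
  with bij_betw_imp_inj_on[OF bij_betw_trivialize_orbit]
  show "inv_into Omega trivialize_orbit (AC_proj y) = omega_orbit (untrivialize_lift y)"
    by (metis inv_into_f_f)
qed

theorem theorem3p4:
  shows "\<exists>F. bij_betw F Omega (A_annulus \<times> C2star)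
            \<and> quot_holo Omega_tilde omega_orbit AC_tilde AC_proj F
            \<and> quot_holo AC_tilde AC_proj Omega_tilde omega_orbit (inv_into Omega F)"
  using bij_betw_trivialize_orbit quot_holo_trivialize_orbit quot_holo_inv_trivialize_orbit
  by blast

end
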